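(* In a soft sequence heap with rank threshold $r_0=\lceil\lg(1/\epsilon)\rceil$, at any time, for every sequence $L$ of rank $r$ and every $x\in\{-\infty\}\cup U$ (where $U$ is the key universe), $|D(L,x)|\le d_r$, where $d_r=0$ for $r\le r_0$ and $d_r=2^{r-r_0-1}$ for $r>r_0$. In particular, the number of corrupted items associated with $L$, namely $|D(L,-\infty)|$, is at most $d_r$.
   Context: Soft sequence heap with error parameter $0<\epsilon<1$. Let $r_0=\lceil \lg(1/\epsilon)\rceil$, where $\lg$ is the binary logarithm. Items are (key, value) pairs with keys from a totally ordered universe $U$; all keys are assumed distinct, and $\mathrm{key}(e)$ denotes the (real) key of item $e$. The heap stores a list $\mathcal L=L_1,\dots,L_\ell$ of nonempty sequences, each sorted increasingly by key and having a nonnegative integer rank, with $\mathrm{rank}(L_1)<\dots<\mathrm{rank}(L_\ell)$. Each item $e$ currently in a sequence carries a (possibly empty) corruption-set $C(e)$ and witness-set $W(e)$. Every item in the heap lies either in exactly one sequence or in exactly one corruption-set $C(e')$ with $e'$ in a sequence, and may additionally lie in one witness-set. The operation $\mathrm{reduce}(L)$ on a sorted sequence $L=e_1,\dots,e_m$: for every $1\le i<m/2$, the item $e_{2i}$ is removed from $L$, the items $\{e_{2i}\}\cup C(e_{2i})$ are added to $C(e_{2i+1})$, and the items $\{e_{2i}\}\cup W(e_{2i})$ are added to $W(e_{2i-1})$ (the sets $C(e_{2i}),W(e_{2i})$ cease to exist). Merging two sequences of equal rank $r$ produces their sorted union, of rank $r+1$ (corruption- and witness-sets unchanged); if $r+1>r_0$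 and $r+1-r_0$ is even, $\mathrm{reduce}$ is then applied to the result. \textsf{insert}$(e)$ puts a new rank-$0$ sequence $(e)$ (with empty sets) at the front of $\mathcal L$ and, while the first two sequences have equal rank, merges them; \textsf{meld} merges two heaps' lists by rank and then merges equal-rank sequences. \textsf{extract-min}: let $e$ be the head of a sequence whose head has minimum key; if $C(e)\neq\emptyset$, remove some $e'$ from $C(e)$ and return it; otherwise remove $e$ from its sequence and its items of $W(e)$ lose their witness (they are in no witness-set afterwards). An item is corrupted if it lies in some corruption-set $C(e')$ and in no witness-set. For an item $e\in C(e')$ with $e'$ in a sequence, define the interval $I(e)=(\mathrm{key}(e''),\mathrm{key}(e')]$ if $e\in W(e'')$ for some $e''$, and $I(e)=(-\infty,\mathrm{key}(e')]$ if $e$ lies in no witness-set. For a sequence $L$ and $x$, $D(L,x)=\{e:\exists e'\in L,\ e\in C(e'),\ x\in I(e)\}$. *)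

theory Defs
  imports Complex_Main
begin

text \<open>Items are identified with their (distinct) keys, which are
elements of a linearly ordered type; values play no role. A heap state consists of the
list of sequences (each a sorted list of items together with its rank), the
corruption-sets C and the witness-sets W of items lying in sequences.\<close>

record 'k sheap =
  seqs :: "('k list \<times> nat) list"
  cmap :: "'k \<Rightarrow> 'k set"
  wmap :: "'k \<Rightarrow> 'k set"

definition seq_items :: "('k, 'z) sheap_scheme \<Rightarrow> 'k set" where
  "seq_items H = (\<Union>(L, r)\<in>set (seqs H). set L)"

definition heap_items :: "('k, 'z) sheap_scheme \<Rightarrow> 'k set" where
  "heap_items H = seq_items H \<union> (\<Union>e\<in>seq_items H. cmap H e)"

definition seq_heads :: "('k, 'z) sheap_scheme \<Rightarrow> 'k set" where
  "seq_heads H = (\<lambda>(L, r). hd L) ` set (seqs H)"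

text \<open>0-indexed position j holds e_(j+1); the removed items e_(2i), 1 \<le> i < m/2,
are exactly those at odd positions j with j+1 < m.\<close>
definition red_pos :: "'k list \<Rightarrow> nat \<Rightarrow> bool" where
  "red_pos L j \<longleftrightarrow> odd j \<and> j + 1 < length L"

definition reduce ::
  "'k list \<Rightarrow> ('k \<Rightarrow> 'k set) \<Rightarrow> ('k \<Rightarrow> 'k set)
    \<Rightarrow> 'k list \<times> ('k \<Rightarrow> 'k set) \<times> ('k \<Rightarrow> 'k set)" where
  "reduce L C W =
    (let R = {L ! j | j. red_pos L j} in
     ([L ! j. j \<leftarrow> [0..<length L], \<not> red_pos L j],
      (\<lambda>e. if e \<in> R then {}
           else C e \<union> (\<Union>j\<in>{j. red_pos L j \<and> L ! (j + 1) = e}. insert (L ! j) (C (L ! j)))),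
      (\<lambda>e. if e \<in> R then {}
           else W e \<union> (\<Union>j\<in>{j. red_pos L j \<and> L ! (j - 1) = e}. insert (L ! j) (W (L ! j))))))"

definition merge ::
  "nat \<Rightarrow> ('k::linorder list \<times> nat) \<Rightarrow> ('k list \<times> nat) \<Rightarrow> ('k \<Rightarrow> 'k set) \<Rightarrow> ('k \<Rightarrow> 'k set)
    \<Rightarrow> ('k list \<times> nat) \<times> ('k \<Rightarrow> 'k set) \<times> ('k \<Rightarrow> 'k set)" where
  "merge r0 A B C W =
    (let L = sort (fst A @ fst B); r = Suc (snd A) in
     if r > r0 \<and> even (r - r0)
     then (case reduce L C W of (L', C', W') \<Rightarrow> ((L', r), C', W'))
     else ((L, r), C, W))"

definition merge_step :: "nat \<Rightarrow> 'k::linorder sheap \<Rightarrow> 'k sheap \<Rightarrow> bool" where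
  "merge_step r0 H H' \<longleftrightarrow>
    (\<exists>xs A B ys. seqs H = xs @ A # B # ys \<and> snd A = snd B \<and>
      (case merge r0 A B (cmap H) (wmap H) of (M, C', W') \<Rightarrow>
         H' = \<lparr>seqs = xs @ M # ys, cmap = C', wmap = W'\<rparr>))"

definition normalize :: "nat \<Rightarrow> 'k::linorder sheap \<Rightarrow> 'k sheap \<Rightarrow> bool" where
  "normalize r0 H H' \<longleftrightarrow> (merge_step r0)\<^sup>*\<^sup>* H H' \<and> sorted_wrt (<) (map snd (seqs H'))"

definition empty_heap :: "'k sheap" where
  "empty_heap = \<lparr>seqs = [], cmap = (\<lambda>_. {}), wmap = (\<lambda>_. {})\<rparr>"

definition insert_init :: "'k \<Rightarrow> 'k sheap \<Rightarrow> 'k sheap" where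
  "insert_init e H = \<lparr>seqs = ([e], 0) # seqs H, cmap = (cmap H)(e := {}), wmap = (wmap H)(e := {})\<rparr>"

definition meld_init :: "'k sheap \<Rightarrow> 'k sheap \<Rightarrow> 'k sheap" where
  "meld_init H1 H2 =
    \<lparr>seqs = sort_key snd (seqs H1 @ seqs H2),
     cmap = (\<lambda>e. if e \<in> seq_items H1 then cmap H1 e else cmap H2 e),
     wmap = (\<lambda>e. if e \<in> seq_items H1 then wmap H1 e else wmap H2 e)\<rparr>"

text \<open>Heap states reachable by a sequence of operations (heaps to be melded are built
independently and have disjoint item sets; inserted items are new).\<close>
inductive reachable :: "nat \<Rightarrow> 'k::linorder sheap \<Rightarrow> bool" for r0 where
  empty: "reachable r0 empty_heap"
| insert: "reachable r0 H \<Longrightarrow> e \<notin> heap_items H \<Longrightarrow> normalize r0 (insert_init e H) H'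
             \<Longrightarrow> reachable r0 H'"
| meld: "reachable r0 H1 \<Longrightarrow> reachable r0 H2 \<Longrightarrow> heap_items H1 \<inter> heap_items H2 = {}
             \<Longrightarrow> normalize r0 (meld_init H1 H2) H' \<Longrightarrow> reachable r0 H'"
| extract_corrupted: "reachable r0 H \<Longrightarrow> seqs H \<noteq> [] \<Longrightarrow> e = Min (seq_heads H)
             \<Longrightarrow> e' \<in> cmap H e
             \<Longrightarrow> H' = \<lparr>seqs = seqs H, cmap = (cmap H)(e := cmap H e - {e'}),
                       wmap = (\<lambda>x. wmap H x - {e'})\<rparr>
             \<Longrightarrow> reachable r0 H'"
| extract_head: "reachable r0 H \<Longrightarrow> seqs H = xs @ (e # rest, r) # ys \<Longrightarrow> e = Min (seq_heads H)
             \<Longrightarrow> cmap H e = {}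
             \<Longrightarrow> H' = \<lparr>seqs = xs @ (if rest = [] then [] else [(rest, r)]) @ ys,
                       cmap = cmap H, wmap = (wmap H)(e := {})\<rparr>
             \<Longrightarrow> reachable r0 H'"

text \<open>Membership of x in the interval I(e), for e \<in> C(e'); x = None encodes -\<infinity>.\<close>
definition in_I :: "'k::linorder sheap \<Rightarrow> 'k \<Rightarrow> 'k \<Rightarrow> 'k option \<Rightarrow> bool" where
  "in_I H e e' x =
    (case x of
       None \<Rightarrow> \<not> (\<exists>e''\<in>seq_items H. e \<in> wmap H e'')
     | Some y \<Rightarrow> y \<le> e' \<and> (\<forall>e''\<in>seq_items H. e \<in> wmap H e'' \<longrightarrow> e'' < y))"

definition Dset :: "'k::linorder sheap \<Rightarrow> 'k list \<Rightarrow> 'k option \<Rightarrow> 'k set" where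
  "Dset H L x = {e. \<exists>e'\<in>set L. e \<in> cmap H e' \<and> in_I H e e' x}"

definition corrupted :: "'k sheap \<Rightarrow> 'k \<Rightarrow> bool" where
  "corrupted H e \<longleftrightarrow> (\<exists>e'\<in>seq_items H. e \<in> cmap H e') \<and> \<not> (\<exists>e''\<in>seq_items H. e \<in> wmap H e'')"

definition dbound :: "nat \<Rightarrow> nat \<Rightarrow> nat" where
  "dbound r0 r = (if r \<le> r0 then 0 else 2 ^ (r - r0 - 1))"

end

theory Submission
  imports Defs "HOL-Library.Multiset"
begin

text \<open>Two invariants are preserved by every operation. Structurally (wf_heap), corruption-sets
are pairwise disjoint and contain no sequence item, and every item of a witness-set W(w) lies in
the corruption-set of a later item of the sequence of w. Quantitatively (heap_bounded), in a
sequence of rank r0 + t every item has |C(e)|, |W(e)| \<le> 2^(t div 2) - 1, and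
|D(L, x)| \<le> 2^(t - 1) - 2^((t - 1) div 2) \<le> d_r for t \<ge> 1 (and 0 for t = 0).
A merge takes the union of two D-sets; a reduction turns a bound b on the C- and W-sets into
2b + 1, and adds to D(L, x) at most one removed item together with one of its sets, namely at
the unique removed position whose neighbours straddle x. Inserting, melding and extracting
corrupted items only shrink the sets D(L, x), and after popping a head e the set D(rest, x)
is contained in the old D(e # rest, max x (hd rest)).\<close>

section \<open>The bounds\<close>

text \<open>The argument t stands for r - r0: reductions happen exactly at the merges producing an
even t > 0.\<close>

fun cw_bound :: "nat \<Rightarrow> nat" where
  "cw_bound 0 = 0"
| "cw_bound (Suc t) = (if even (Suc t) then 2 * cw_bound t + 1 else cw_bound t)"

fun d_bound :: "nat \<Rightarrow> nat" where
  "d_bound 0 = 0"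
| "d_bound (Suc t) = (if even (Suc t) then 2 * d_bound t + cw_bound t + 1 else 2 * d_bound t)"

lemma cw_bound_eq: "cw_bound t + 1 = 2 ^ (t div 2)"
  by (induction t) (auto elim: oddE)

lemma d_bound_eq: "d_bound (Suc t) + 2 ^ (t div 2) = 2 ^ t"
proof (induction t)
  case (Suc t)
  show ?case
  proof (cases "even t")
    case True
    then show ?thesis using Suc cw_bound_eq[of "Suc t"] by (auto elim!: evenE)
  next
    case False
    then show ?thesis using Suc by (auto elim!: oddE)
  qed
qed simp

lemma d_bound_le_dbound: "d_bound (r - r0) \<le> dbound r0 r"
proof (cases "r \<le> r0")
  case False
  then obtain t where "r - r0 = Suc t" by (metis Suc_diff_Suc not_le)
  then show ?thesis using False d_bound_eq[of t] by (simp add: dbound_def)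
qed (simp add: dbound_def)

lemma d_bound_Suc_ge: "2 * d_bound (r - r0) \<le> d_bound (Suc r - r0)"
  by (cases "r < r0") (auto simp: Suc_diff_le)

lemma cw_bound_Suc_ge: "cw_bound (r - r0) \<le> cw_bound (Suc r - r0)"
  by (cases "r < r0") (auto simp: Suc_diff_le)

lemma bounds_Suc_even:
  assumes "r0 < Suc r" and "even (Suc r - r0)"
  shows "d_bound (Suc r - r0) = 2 * d_bound (r - r0) + cw_bound (r - r0) + 1"
    and "cw_bound (Suc r - r0) = 2 * cw_bound (r - r0) + 1"
  using assms by (auto simp: Suc_diff_le)

section \<open>Reduction of a sorted sequence\<close>

definition reduce_removed :: "'k list \<Rightarrow> 'k set" where
  "reduce_removed L = {L ! j | j. red_pos L j}"

lemma red_pos_less_length: "red_pos L j \<Longrightarrow> j + 1 < length L"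
  by (simp add: red_pos_def)

lemma red_pos_neighbours:
  assumes "red_pos L j"
  shows "0 < j" and "\<not> red_pos L (j - 1)" and "\<not> red_pos L (j + 1)"
  using assms by (auto simp: red_pos_def elim: oddE)

lemma finite_red_pos: "finite {j. red_pos L j \<and> P j}"
  by (rule finite_subset[of _ "{..<length L}"]) (auto dest: red_pos_less_length)

lemma reduce_removed_subset: "reduce_removed L \<subseteq> set L"
  by (auto simp: reduce_removed_def red_pos_def)

lemma nth_in_reduce_removed_iff:
  assumes "distinct L" and "k < length L"
  shows "L ! k \<in> reduce_removed L \<longleftrightarrow> red_pos L k"
proof -
  have "L ! k = L ! j \<longleftrightarrow> k = j" if "red_pos L j" for j
    using assms red_pos_less_length[OF that] by (simp add: nth_eq_iff_index_eq)
  then show ?thesis unfolding reduce_removed_def by blast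
qed

lemma fst_reduce: "fst (reduce L C W) = map (nth L) (filter (\<lambda>j. \<not> red_pos L j) [0..<length L])"
proof -
  have "concat (map (\<lambda>j. if P j then [f j] else []) js) = map f (filter P js)" for P f js
    by (induction js) auto
  then show ?thesis unfolding reduce_def Let_def by simp
qed

lemma fst_snd_reduce: "fst (snd (reduce L C W)) = (\<lambda>e. if e \<in> reduce_removed L then {}
    else C e \<union> (\<Union>j\<in>{j. red_pos L j \<and> L ! (j + 1) = e}. insert (L ! j) (C (L ! j))))"
  unfolding reduce_def Let_def reduce_removed_def by simp

lemma snd_snd_reduce: "snd (snd (reduce L C W)) = (\<lambda>e. if e \<in> reduce_removed L then {}
    else W e \<union> (\<Union>j\<in>{j. red_pos L j \<and> L ! (j - 1) = e}. insert (L ! j) (W (L ! j))))"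
  unfolding reduce_def Let_def reduce_removed_def by simp

lemma set_fst_reduce: "x \<in> set (fst (reduce L C W)) \<longleftrightarrow> (\<exists>k<length L. \<not> red_pos L k \<and> x = L ! k)"
  by (auto simp: fst_reduce)

lemma set_fst_reduce_distinct:
  assumes "distinct L"
  shows "set (fst (reduce L C W)) = set L - reduce_removed L"
  unfolding set_eq_iff set_fst_reduce
  by (auto simp: in_set_conv_nth nth_in_reduce_removed_iff[OF assms])

lemma distinct_fst_reduce: "distinct L \<Longrightarrow> distinct (fst (reduce L C W))"
  by (auto simp: fst_reduce distinct_map inj_on_def nth_eq_iff_index_eq)

lemma sorted_fst_reduce: "sorted_wrt (<) L \<Longrightarrow> sorted_wrt (<) (fst (reduce L C W))"
  unfolding fst_reduce sorted_wrt_map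
  by (rule sorted_wrt_filter) (auto simp: sorted_wrt_iff_nth_less sorted_wrt_upt)

lemma fst_reduce_not_Nil: "L \<noteq> [] \<Longrightarrow> fst (reduce L C W) \<noteq> []"
  using set_fst_reduce[of "L ! 0" L C W] by (auto simp: red_pos_def)

lemma fst_snd_reduce_outside: "e \<notin> set L \<Longrightarrow> fst (snd (reduce L C W)) e = C e"
  unfolding fst_snd_reduce using reduce_removed_subset[of L] by (auto dest: red_pos_less_length)

lemma snd_snd_reduce_outside:
  assumes "e \<notin> set L"
  shows "snd (snd (reduce L C W)) e = W e"
proof -
  have "L ! (j - 1) \<noteq> e" if "red_pos L j" for j
    using assms red_pos_less_length[OF that] by (metis add_lessD1 less_imp_diff_less nth_mem)
  then show ?thesis unfolding snd_snd_reduce using assms reduce_removed_subset[of L] by auto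
qed

lemma fst_snd_reduce_removed: "e \<in> reduce_removed L \<Longrightarrow> fst (snd (reduce L C W)) e = {}"
  unfolding fst_snd_reduce by simp

lemma snd_snd_reduce_removed: "e \<in> reduce_removed L \<Longrightarrow> snd (snd (reduce L C W)) e = {}"
  unfolding snd_snd_reduce by simp

lemma fst_snd_reduce_kept:
  assumes "distinct L" and "k < length L" and "\<not> red_pos L k"
  shows "fst (snd (reduce L C W)) (L ! k) = C (L ! k) \<union>
     (if 0 < k \<and> red_pos L (k - 1) then insert (L ! (k - 1)) (C (L ! (k - 1))) else {})"
proof -
  have "L ! (j + 1) = L ! k \<longleftrightarrow> j + 1 = k" if "red_pos L j" for j
    using assms red_pos_less_length[OF that] by (simp add: nth_eq_iff_index_eq)
  then have "{j. red_pos L j \<and> L ! (j + 1) = L ! k} = (if 0 < k \<and> red_pos L (k - 1) then {k - 1} else {})"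
    by auto
  then show ?thesis
    using assms unfolding fst_snd_reduce by (simp add: nth_in_reduce_removed_iff)
qed

lemma snd_snd_reduce_kept:
  assumes "distinct L" and "k < length L" and "\<not> red_pos L k"
  shows "snd (snd (reduce L C W)) (L ! k) = W (L ! k) \<union>
     (if red_pos L (k + 1) then insert (L ! (k + 1)) (W (L ! (k + 1))) else {})"
proof -
  have "L ! (j - 1) = L ! k \<longleftrightarrow> j = k + 1" if "red_pos L j" for j
    using assms red_pos_less_length[OF that] red_pos_neighbours(1)[OF that]
    by (auto simp: nth_eq_iff_index_eq)
  then have "{j. red_pos L j \<and> L ! (j - 1) = L ! k} = (if red_pos L (k + 1) then {k + 1} else {})"
    by auto
  then show ?thesis
    using assms unfolding snd_snd_reduce by (simp add: nth_in_reduce_removed_iff)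
qed

lemma mem_fst_snd_reduce: "f \<in> fst (snd (reduce L C W)) e \<Longrightarrow> e \<notin> reduce_removed L \<and>
   (f \<in> C e \<or> (\<exists>j. red_pos L j \<and> L ! (j + 1) = e \<and> (f = L ! j \<or> f \<in> C (L ! j))))"
  unfolding fst_snd_reduce by (auto split: if_splits)

lemma finite_fst_snd_reduce: "(\<And>e. finite (C e)) \<Longrightarrow> finite (fst (snd (reduce L C W)) e)"
  unfolding fst_snd_reduce using finite_red_pos[of L] by auto

lemma finite_snd_snd_reduce: "(\<And>e. finite (W e)) \<Longrightarrow> finite (snd (snd (reduce L C W)) e)"
  unfolding snd_snd_reduce using finite_red_pos[of L] by auto

section \<open>Invariants\<close>

lemma seq_items_eq: "seq_items H = set (concat (map fst (seqs H)))"
  by (auto simp: seq_items_def)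

lemma seq_itemsI: "(K, r) \<in> set (seqs H) \<Longrightarrow> w \<in> set K \<Longrightarrow> w \<in> seq_items H"
  unfolding seq_items_def by blast

definition witnesses :: "'k sheap \<Rightarrow> 'k \<Rightarrow> 'k set" where
  "witnesses H f = {w \<in> seq_items H. f \<in> wmap H w}"

lemma in_I_witnesses: "in_I H f c x =
    (case x of None \<Rightarrow> witnesses H f = {} | Some y \<Rightarrow> y \<le> c \<and> (\<forall>w\<in>witnesses H f. w < y))"
  by (auto simp: in_I_def witnesses_def split: option.splits)

lemma Dset_mono:
  assumes "\<And>c f. c \<in> set K \<Longrightarrow> f \<in> cmap H' c \<Longrightarrow> f \<in> cmap H c \<and> witnesses H f \<subseteq> witnesses H' f"
  shows "Dset H' K x \<subseteq> Dset H K x"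
  using assms unfolding Dset_def in_I_witnesses by (fastforce split: option.splits)

locale wf_heap =
  fixes H :: "'k::linorder sheap"
  assumes distinct_items: "distinct (concat (map fst (seqs H)))"
    and seq_not_Nil: "(L, r) \<in> set (seqs H) \<Longrightarrow> L \<noteq> []"
    and seq_sorted: "(L, r) \<in> set (seqs H) \<Longrightarrow> sorted_wrt (<) L"
    and sets_outside: "e \<notin> seq_items H \<Longrightarrow> cmap H e = {} \<and> wmap H e = {}"
    and seq_item_notin_cmap: "e \<in> seq_items H \<Longrightarrow> e \<notin> cmap H e'"
    and cmap_disjoint: "e1 \<noteq> e2 \<Longrightarrow> cmap H e1 \<inter> cmap H e2 = {}"
    and witnessed_corrupted_later:
      "(L, r) \<in> set (seqs H) \<Longrightarrow> w \<in> set L \<Longrightarrow> f \<in> wmap H w \<Longrightarrow> \<exists>c\<in>set L. w < c \<and> f \<in> cmap H c"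
    and finite_cmap: "finite (cmap H e)"
    and finite_wmap: "finite (wmap H e)"
begin

lemma finite_Dset: "finite (Dset H K x)"
  by (rule finite_subset[of _ "\<Union>c\<in>set K. cmap H c"]) (auto simp: Dset_def finite_cmap)

lemma cmap_subset_heap_items: "cmap H c \<subseteq> heap_items H"
  using sets_outside[of c] by (cases "c \<in> seq_items H") (auto simp: heap_items_def)

lemma insert_cmap_disjoint:
  assumes "u \<in> seq_items H" and "v \<in> seq_items H" and "u \<noteq> v"
  shows "insert u (cmap H u) \<inter> insert v (cmap H v) = {}"
  using assms seq_item_notin_cmap cmap_disjoint[OF assms(3)] by blast

end

definition seq_bounded :: "nat \<Rightarrow> 'k::linorder sheap \<Rightarrow> 'k list \<Rightarrow> nat \<Rightarrow> bool" where
  "seq_bounded r0 H L r \<longleftrightarrow> (\<forall>x. card (Dset H L x) \<le> d_bound (r - r0)) \<and>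
    (\<forall>e\<in>set L. card (cmap H e) \<le> cw_bound (r - r0) \<and> card (wmap H e) \<le> cw_bound (r - r0))"

definition heap_bounded :: "nat \<Rightarrow> 'k::linorder sheap \<Rightarrow> bool" where
  "heap_bounded r0 H \<longleftrightarrow> (\<forall>(L, r)\<in>set (seqs H). seq_bounded r0 H L r)"

lemma heap_boundedD: "heap_bounded r0 H \<Longrightarrow> (L, r) \<in> set (seqs H) \<Longrightarrow> seq_bounded r0 H L r"
  by (auto simp: heap_bounded_def)

lemma heap_boundedI: "(\<And>L r. (L, r) \<in> set (seqs H) \<Longrightarrow> seq_bounded r0 H L r) \<Longrightarrow> heap_bounded r0 H"
  by (auto simp: heap_bounded_def)

lemma seq_bounded_mono:
  assumes "wf_heap H" and "seq_bounded r0 H K r"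
    and "\<And>c f. c \<in> set K \<Longrightarrow> f \<in> cmap H' c \<Longrightarrow> witnesses H f \<subseteq> witnesses H' f"
    and "\<And>e. e \<in> set K \<Longrightarrow> cmap H' e \<subseteq> cmap H e \<and> wmap H' e \<subseteq> wmap H e"
  shows "seq_bounded r0 H' K r"
proof -
  interpret wf_heap H by fact
  have "Dset H' K x \<subseteq> Dset H K x" for x
    by (rule Dset_mono) (use assms(3,4) in blast)
  then have "card (Dset H' K x) \<le> card (Dset H K x)" for x
    by (simp add: card_mono finite_Dset)
  moreover have "card (cmap H' e) \<le> card (cmap H e) \<and> card (wmap H' e) \<le> card (wmap H e)"
    if "e \<in> set K" for e
    using assms(4)[OF that] by (simp add: card_mono finite_cmap finite_wmap)
  ultimately show ?thesis
    using assms(2) unfolding seq_bounded_def by (meson order_trans)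
qed

locale heap_seq = wf_heap H for H :: "'k::linorder sheap" +
  fixes xs ys :: "('k list \<times> nat) list" and L :: "'k list" and s :: nat
  assumes seqs_split: "seqs H = xs @ (L, s) # ys"
begin

definition "reduced_seq = fst (reduce L (cmap H) (wmap H))"
definition "reduced_C = fst (snd (reduce L (cmap H) (wmap H)))"
definition "reduced_W = snd (snd (reduce L (cmap H) (wmap H)))"
definition "reduced_heap = \<lparr>seqs = xs @ (reduced_seq, s) # ys, cmap = reduced_C, wmap = reduced_W\<rparr>"

lemma reduced_heap_simps [simp]:
  "seqs reduced_heap = xs @ (reduced_seq, s) # ys"
  "cmap reduced_heap = reduced_C" "wmap reduced_heap = reduced_W"
  by (simp_all add: reduced_heap_def)

lemma seq_in_heap: "(L, s) \<in> set (seqs H)"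
  by (simp add: seqs_split)

lemma distinct_seq: "distinct L"
  using distinct_items by (simp add: seqs_split)

lemma seq_nth_less: "i < j \<Longrightarrow> j < length L \<Longrightarrow> L ! i < L ! j"
  using seq_sorted[OF seq_in_heap] by (simp add: sorted_wrt_iff_nth_less)

lemma seq_disjoint_others: "(K, r) \<in> set (xs @ ys) \<Longrightarrow> c \<in> set K \<Longrightarrow> c \<notin> set L"
  using distinct_items by (fastforce simp: seqs_split)

lemma seq_items_split: "seq_items H = set (concat (map fst xs)) \<union> set L \<union> set (concat (map fst ys))"
  by (auto simp: seq_items_eq seqs_split)

lemma set_reduced_seq: "set reduced_seq = set L - reduce_removed L"
  unfolding reduced_seq_def by (rule set_fst_reduce_distinct[OF distinct_seq])

lemma kept_in_reduced_seq: "k < length L \<Longrightarrow> \<not> red_pos L k \<Longrightarrow> L ! k \<in> set reduced_seq"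
  unfolding reduced_seq_def set_fst_reduce by blast

lemma seq_items_reduced_heap: "seq_items reduced_heap = seq_items H - reduce_removed L"
proof -
  have "set L \<inter> (set (concat (map fst xs)) \<union> set (concat (map fst ys))) = {}"
    using distinct_items by (auto simp: seqs_split)
  moreover have "seq_items reduced_heap =
      set (concat (map fst xs)) \<union> set reduced_seq \<union> set (concat (map fst ys))"
    by (auto simp: seq_items_eq)
  ultimately show ?thesis
    using reduce_removed_subset[of L] unfolding seq_items_split set_reduced_seq by auto
qed

lemma reduced_C_outside: "e \<notin> set L \<Longrightarrow> reduced_C e = cmap H e"
  unfolding reduced_C_def by (rule fst_snd_reduce_outside)

lemma reduced_W_outside: "e \<notin> set L \<Longrightarrow> reduced_W e = wmap H e"
  unfolding reduced_W_def by (rule snd_snd_reduce_outside)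

lemma reduced_C_kept: "k < length L \<Longrightarrow> \<not> red_pos L k \<Longrightarrow> reduced_C (L ! k) = cmap H (L ! k) \<union>
    (if 0 < k \<and> red_pos L (k - 1) then insert (L ! (k - 1)) (cmap H (L ! (k - 1))) else {})"
  unfolding reduced_C_def by (rule fst_snd_reduce_kept[OF distinct_seq])

lemma reduced_W_kept: "k < length L \<Longrightarrow> \<not> red_pos L k \<Longrightarrow> reduced_W (L ! k) = wmap H (L ! k) \<union>
    (if red_pos L (k + 1) then insert (L ! (k + 1)) (wmap H (L ! (k + 1))) else {})"
  unfolding reduced_W_def by (rule snd_snd_reduce_kept[OF distinct_seq])

lemma mem_reduced_C: "f \<in> reduced_C e \<Longrightarrow> e \<notin> reduce_removed L \<and>
    (f \<in> cmap H e \<or> (\<exists>j. red_pos L j \<and> L ! (j + 1) = e \<and> (f = L ! j \<or> f \<in> cmap H (L ! j))))"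
  unfolding reduced_C_def by (rule mem_fst_snd_reduce)

lemma reduced_sets_kept:
  assumes "e \<notin> reduce_removed L"
  shows "cmap H e \<subseteq> reduced_C e" and "wmap H e \<subseteq> reduced_W e"
proof -
  have "cmap H e \<subseteq> reduced_C e \<and> wmap H e \<subseteq> reduced_W e"
  proof (cases "e \<in> set L")
    case True
    then obtain k where k: "k < length L" "e = L ! k" by (auto simp: in_set_conv_nth)
    then have "\<not> red_pos L k" using assms nth_in_reduce_removed_iff[OF distinct_seq] by simp
    then show ?thesis using reduced_C_kept[OF k(1)] reduced_W_kept[OF k(1)] k(2) by auto
  qed (simp add: reduced_C_outside reduced_W_outside)
  then show "cmap H e \<subseteq> reduced_C e" and "wmap H e \<subseteq> reduced_W e" by simp_all
qed

lemma removed_witnessed_by_pred: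
  assumes "red_pos L j"
  shows "insert (L ! j) (wmap H (L ! j)) \<subseteq> reduced_W (L ! (j - 1))"
    and "L ! (j - 1) \<in> set reduced_seq"
proof -
  have p: "j - 1 < length L" "\<not> red_pos L (j - 1)" "j - 1 + 1 = j"
    using red_pos_less_length[OF assms] red_pos_neighbours[OF assms] by auto
  then show "insert (L ! j) (wmap H (L ! j)) \<subseteq> reduced_W (L ! (j - 1))"
    using reduced_W_kept[OF p(1,2)] assms by auto
  show "L ! (j - 1) \<in> set reduced_seq" by (rule kept_in_reduced_seq[OF p(1,2)])
qed

lemma witnesses_reduced:
  assumes "w \<in> witnesses H f"
  shows "(w \<notin> reduce_removed L \<and> w \<in> witnesses reduced_heap f) \<or>
    (\<exists>p. red_pos L p \<and> w = L ! p \<and> L ! (p - 1) \<in> witnesses reduced_heap f)"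
proof (cases "w \<in> reduce_removed L")
  case False
  then show ?thesis
    using assms reduced_sets_kept(2)[OF False]
    by (auto simp: witnesses_def seq_items_reduced_heap)
next
  case True
  then obtain p where p: "red_pos L p" "w = L ! p" by (auto simp: reduce_removed_def)
  have "L ! (p - 1) \<in> seq_items reduced_heap"
    using removed_witnessed_by_pred(2)[OF p(1)] by (auto simp: seq_items_eq)
  then show ?thesis
    using assms p removed_witnessed_by_pred(1)[OF p(1)]
    by (auto simp: witnesses_def)
qed

lemma cmap_lifted:
  assumes "c \<in> set L" and "f \<in> cmap H c"
  shows "\<exists>c'\<in>set reduced_seq. c \<le> c' \<and> f \<in> reduced_C c'"
proof -
  obtain i where i: "i < length L" "c = L ! i" using assms(1) by (auto simp: in_set_conv_nth)
  show ?thesis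
  proof (cases "red_pos L i")
    case False
    then show ?thesis using kept_in_reduced_seq[OF i(1)] reduced_C_kept[OF i(1)] i assms by auto
  next
    case True
    have s: "i + 1 < length L" "\<not> red_pos L (i + 1)"
      using red_pos_less_length[OF True] red_pos_neighbours(3)[OF True] by auto
    have "f \<in> reduced_C (L ! (i + 1))" using reduced_C_kept[OF s] True assms i by simp
    moreover have "c \<le> L ! (i + 1)" using seq_nth_less[of i "i + 1"] s i by simp
    ultimately show ?thesis using kept_in_reduced_seq[OF s] by blast
  qed
qed

lemma reduced_C_disjoint:
  assumes "e1 \<noteq> e2"
  shows "reduced_C e1 \<inter> reduced_C e2 = {}"
proof (rule ccontr)
  define sources where "sources e = insert e {L ! j | j. red_pos L j \<and> L ! (j + 1) = e}" for e :: 'k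
  \<comment> \<open>each f \<in> reduced_C e lies in insert u (cmap H u) for a source u of e, and different
    items have disjoint sources\<close>
  have source: "\<exists>u\<in>sources e. u \<in> seq_items H \<and> f \<in> insert u (cmap H u)" if "f \<in> reduced_C e" for f e :: 'k
  proof -
    have nth_item: "L ! j \<in> seq_items H" if "j < length L" for j
      using that seq_items_split by auto
    from mem_reduced_C[OF that] consider "f \<in> cmap H e"
      | j where "red_pos L j" "L ! (j + 1) = e" "f \<in> insert (L ! j) (cmap H (L ! j))" by blast
    then show ?thesis
    proof cases
      case 1
      then have "e \<in> seq_items H" using sets_outside by blast
      then show ?thesis using 1 by (auto simp: sources_def)
    next
      case 2
      then show ?thesis using nth_item red_pos_less_length[OF 2(1)] by (auto simp: sources_def)
    qed
  qed
  assume "reduced_C e1 \<inter> reduced_C e2 \<noteq> {}"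
  then obtain f where f: "f \<in> reduced_C e1" "f \<in> reduced_C e2" by blast
  obtain u1 u2 where u: "u1 \<in> sources e1" "u2 \<in> sources e2" "u1 \<in> seq_items H" "u2 \<in> seq_items H"
    and fu: "f \<in> insert u1 (cmap H u1)" "f \<in> insert u2 (cmap H u2)"
    using source[OF f(1)] source[OF f(2)] by blast
  have kept: "e1 \<notin> reduce_removed L" "e2 \<notin> reduce_removed L"
    using mem_reduced_C f by blast+
  have "u1 \<noteq> u2"
  proof
    assume "u1 = u2"
    moreover have "j1 = j2" if "red_pos L j1" "red_pos L j2" "L ! j1 = L ! j2" for j1 j2
      using that distinct_seq red_pos_less_length[OF that(1)] red_pos_less_length[OF that(2)]
      by (simp add: nth_eq_iff_index_eq)
    ultimately show False
      using u(1,2) kept assms by (auto simp: sources_def reduce_removed_def)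
  qed
  then show False using insert_cmap_disjoint[OF u(3,4)] fu by blast
qed

lemma wmap_lifted:
  assumes "c \<in> set L" and "f \<in> wmap H c"
  shows "\<exists>c'\<in>set reduced_seq. c < c' \<and> f \<in> reduced_C c'"
proof -
  obtain c'' where "c'' \<in> set L" "c < c''" "f \<in> cmap H c''"
    using witnessed_corrupted_later[OF seq_in_heap assms] by blast
  then show ?thesis using cmap_lifted by (meson less_le_trans)
qed

lemma reduced_witnessed_corrupted_later:
  assumes "(K, r) \<in> set (seqs reduced_heap)" and "w \<in> set K" and "f \<in> reduced_W w"
  shows "\<exists>c\<in>set K. w < c \<and> f \<in> reduced_C c"
proof -
  consider "(K, r) \<in> set (xs @ ys)" | "K = reduced_seq" using assms(1) by auto
  then show ?thesis
  proof cases
    case 1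
    then have "(K, r) \<in> set (seqs H)" by (auto simp: seqs_split)
    moreover have "f \<in> wmap H w"
      using assms(3) reduced_W_outside seq_disjoint_others[OF 1 assms(2)] by simp
    ultimately obtain c where c: "c \<in> set K" "w < c" "f \<in> cmap H c"
      using witnessed_corrupted_later assms(2) by blast
    then show ?thesis using reduced_C_outside seq_disjoint_others[OF 1 c(1)] by auto
  next
    case 2
    then obtain k where k: "k < length L" "\<not> red_pos L k" "w = L ! k"
      using assms(2) by (auto simp: reduced_seq_def set_fst_reduce)
    from assms(3) consider "f \<in> wmap H w" | "red_pos L (k + 1)" "f = L ! (k + 1)"
      | "red_pos L (k + 1)" "f \<in> wmap H (L ! (k + 1))"
      using reduced_W_kept[OF k(1,2)] k(3) by (auto split: if_splits)
    then show ?thesis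
    proof cases
      case 1
      then show ?thesis using wmap_lifted[of w f] k 2 by auto
    next
      case 2
      have s: "k + 2 < length L" "\<not> red_pos L (k + 2)"
        using red_pos_less_length[OF 2(1)] red_pos_neighbours(3)[OF 2(1)] by auto
      have "k + 2 - 1 = k + 1" by simp
      then have "f \<in> reduced_C (L ! (k + 2))"
        using reduced_C_kept[OF s] 2 by simp
      moreover have "w < L ! (k + 2)" using seq_nth_less[of k "k + 2"] s k(3) by simp
      ultimately show ?thesis using kept_in_reduced_seq[OF s] 2 \<open>K = reduced_seq\<close> by blast
    next
      case 3
      have "k + 1 < length L" using red_pos_less_length[OF 3(1)] by simp
      then have "w < L ! (k + 1)" "L ! (k + 1) \<in> set L"
        using seq_nth_less[of k "k + 1"] k(3) by simp_all
      then show ?thesis using wmap_lifted 3(2) \<open>K = reduced_seq\<close> by (meson less_trans)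
    qed
  qed
qed

lemma wf_reduced_heap: "wf_heap reduced_heap"
proof
  have "distinct reduced_seq" "set reduced_seq \<subseteq> set L"
    using distinct_fst_reduce[OF distinct_seq] set_reduced_seq by (auto simp: reduced_seq_def)
  then show "distinct (concat (map fst (seqs reduced_heap)))"
    using distinct_items by (auto simp: seqs_split)
  have "reduced_seq \<noteq> []" "sorted_wrt (<) reduced_seq"
    unfolding reduced_seq_def
    using fst_reduce_not_Nil[OF seq_not_Nil] sorted_fst_reduce[OF seq_sorted] seq_in_heap by auto
  then show "K \<noteq> []" and "sorted_wrt (<) K" if "(K, r) \<in> set (seqs reduced_heap)" for K r
    using that seq_not_Nil seq_sorted by (auto simp: seqs_split)
  show "cmap reduced_heap e = {} \<and> wmap reduced_heap e = {}" if "e \<notin> seq_items reduced_heap" for e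
  proof (cases "e \<in> reduce_removed L")
    case True
    then show ?thesis
      by (simp add: reduced_C_def reduced_W_def fst_snd_reduce_removed snd_snd_reduce_removed)
  next
    case False
    then have "e \<notin> seq_items H" using that seq_items_reduced_heap by auto
    then show ?thesis
      using sets_outside seq_items_split reduced_C_outside reduced_W_outside by auto
  qed
  show "e \<notin> cmap reduced_heap e'" if "e \<in> seq_items reduced_heap" for e e'
    using that mem_reduced_C[of e e'] seq_item_notin_cmap
    by (auto simp: seq_items_reduced_heap reduce_removed_def)
  show "cmap reduced_heap e1 \<inter> cmap reduced_heap e2 = {}" if "e1 \<noteq> e2" for e1 e2
    using reduced_C_disjoint[OF that] by simp
  show "\<exists>c\<in>set K. w < c \<and> f \<in> cmap reduced_heap c"
    if "(K, r) \<in> set (seqs reduced_heap)" "w \<in> set K" "f \<in> wmap reduced_heap w" for K r w f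
    using reduced_witnessed_corrupted_later that by simp
  show "finite (cmap reduced_heap e)" "finite (wmap reduced_heap e)" for e
    using finite_fst_snd_reduce[OF finite_cmap] finite_snd_snd_reduce[OF finite_wmap]
    by (simp_all add: reduced_C_def reduced_W_def)
qed

lemma reduced_sets_other:
  assumes "(K, r) \<in> set (xs @ ys)" and "c \<in> set K"
  shows "reduced_C c = cmap H c" and "reduced_W c = wmap H c"
  using seq_disjoint_others[OF assms] reduced_C_outside reduced_W_outside by simp_all

lemma witnesses_reduced_other:
  assumes "(K, r) \<in> set (xs @ ys)" and "c \<in> set K" and "f \<in> cmap H c"
  shows "witnesses H f \<subseteq> witnesses reduced_heap f"
proof
  fix w assume w: "w \<in> witnesses H f"
  have "w \<notin> reduce_removed L"
  proof
    assume "w \<in> reduce_removed L"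
    then have "w \<in> set L" using reduce_removed_subset[of L] by blast
    then obtain c' where "c' \<in> set L" "f \<in> cmap H c'"
      using witnessed_corrupted_later[OF seq_in_heap] w by (auto simp: witnesses_def)
    then show False
      using cmap_disjoint[of c' c] assms(3) seq_disjoint_others[OF assms(1,2)] by auto
  qed
  then show "w \<in> witnesses reduced_heap f"
    using witnesses_reduced[OF w] by (auto simp: reduce_removed_def)
qed

lemma seq_bounded_reduced_other:
  assumes "seq_bounded r0 H K r" and "(K, r) \<in> set (xs @ ys)"
  shows "seq_bounded r0 reduced_heap K r"
  by (rule seq_bounded_mono[OF wf_heap_axioms assms(1)])
    (use witnesses_reduced_other[OF assms(2)] reduced_sets_other[OF assms(2)] in auto)

lemma Dset_reduced_None: "Dset reduced_heap reduced_seq None \<subseteq> Dset H L None"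
proof
  fix f assume "f \<in> Dset reduced_heap reduced_seq None"
  then obtain c where c: "c \<in> set reduced_seq" "f \<in> reduced_C c"
    and unwitnessed: "witnesses reduced_heap f = {}"
    unfolding Dset_def in_I_witnesses by auto
  then have unwitnessed_before: "witnesses H f = {}" using witnesses_reduced by blast
  have "c \<in> set L" using c(1) set_reduced_seq by blast
  from mem_reduced_C[OF c(2)] consider "f \<in> cmap H c"
    | j where "red_pos L j" "f = L ! j" | j where "red_pos L j" "f \<in> cmap H (L ! j)" by blast
  then show "f \<in> Dset H L None"
  proof cases
    case 1
    then show ?thesis
      using \<open>c \<in> set L\<close> unwitnessed_before unfolding Dset_def in_I_witnesses by auto
  next
    case (2 j)
    then show ?thesis
      using removed_witnessed_by_pred[OF 2(1)] unwitnessed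
      by (auto simp: witnesses_def seq_items_eq)
  next
    case (3 j)
    then show ?thesis
      using red_pos_less_length[OF 3(1)] unwitnessed_before
      unfolding Dset_def in_I_witnesses by force
  qed
qed

text \<open>The only new members of D(L, y) come from the removed position p whose neighbours
straddle y: the item at p and its witness-set (if y \<le> L ! p) or its corruption-set.\<close>
definition "straddling y = {p. red_pos L p \<and> L ! (p - 1) < y \<and> y \<le> L ! (p + 1)}"

definition "D_increment y = (\<Union>p\<in>straddling y.
     insert (L ! p) (if y \<le> L ! p then wmap H (L ! p) else cmap H (L ! p)))"

lemma straddling_unique: "p \<in> straddling y \<Longrightarrow> q \<in> straddling y \<Longrightarrow> p = q"
proof (rule ccontr)
  have not_less: "\<not> p < q" if p: "p \<in> straddling y" and q: "q \<in> straddling y" for p q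
  proof
    assume "p < q"
    moreover have "odd p" "odd q" using p q by (auto simp: straddling_def red_pos_def)
    ultimately have "p + 1 \<le> q - 1" by (auto elim!: oddE)
    moreover have "q - 1 < length L"
      using q red_pos_less_length[of L q] by (auto simp: straddling_def)
    ultimately have "L ! (p + 1) \<le> L ! (q - 1)"
      using seq_nth_less[of "p + 1" "q - 1"] by (cases "p + 1 = q - 1") auto
    then show False using p q by (auto simp: straddling_def)
  qed
  assume "p \<in> straddling y" "q \<in> straddling y" "p \<noteq> q"
  then show False using not_less by (meson linorder_neqE_nat)
qed

lemma witnesses_reduced_below:
  assumes "\<forall>w\<in>witnesses reduced_heap f. w < y"
  shows "(\<forall>w\<in>witnesses H f. w < y) \<or> (\<exists>p\<in>straddling y. y \<le> L ! p \<and> f \<in> wmap H (L ! p))"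
proof (rule ccontr)
  assume "\<not> ?thesis"
  then obtain w where w: "w \<in> witnesses H f" "\<not> w < y"
    and no_straddle: "\<not> (\<exists>p\<in>straddling y. y \<le> L ! p \<and> f \<in> wmap H (L ! p))"
    by blast
  from witnesses_reduced[OF w(1)] obtain p where p: "red_pos L p" "w = L ! p"
    "L ! (p - 1) \<in> witnesses reduced_heap f"
    using assms w(2) by blast
  have "L ! p < L ! (p + 1)" using seq_nth_less[of p "p + 1"] red_pos_less_length[OF p(1)] by simp
  then have "p \<in> straddling y"
    using assms p w(2) by (auto simp: straddling_def)
  then show False using no_straddle w p(2) by (auto simp: witnesses_def)
qed

lemma Dset_reduced_Some: "Dset reduced_heap reduced_seq (Some y) \<subseteq> Dset H L (Some y) \<union> D_increment y"
proof
  fix f assume "f \<in> Dset reduced_heap reduced_seq (Some y)"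
  then obtain c where c: "c \<in> set reduced_seq" "f \<in> reduced_C c" "y \<le> c"
    and below: "\<forall>w\<in>witnesses reduced_heap f. w < y"
    unfolding Dset_def in_I_witnesses by auto
  have inc: "f \<in> D_increment y" if "p \<in> straddling y" "f = L ! p \<or>
      (y \<le> L ! p \<and> f \<in> wmap H (L ! p)) \<or> (\<not> y \<le> L ! p \<and> f \<in> cmap H (L ! p))" for p
    using that unfolding D_increment_def by auto
  have old: "f \<in> Dset H L (Some y) \<union> D_increment y"
    if "c' \<in> set L" "f \<in> cmap H c'" "y \<le> c'" for c'
    using witnesses_reduced_below[OF below] that inc unfolding Dset_def in_I_witnesses by auto
  have "c \<in> set L" using c(1) set_reduced_seq by blast
  from mem_reduced_C[OF c(2)] consider "f \<in> cmap H c"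
    | j where "red_pos L j" "L ! (j + 1) = c" "f = L ! j"
    | j where "red_pos L j" "L ! (j + 1) = c" "f \<in> cmap H (L ! j)" by blast
  then show "f \<in> Dset H L (Some y) \<union> D_increment y"
  proof cases
    case 1
    then show ?thesis using old \<open>c \<in> set L\<close> c(3) by blast
  next
    case (2 j)
    have "L ! (j - 1) \<in> witnesses reduced_heap f"
      using removed_witnessed_by_pred[OF 2(1)] 2(3) by (auto simp: witnesses_def seq_items_eq)
    then have "j \<in> straddling y" using 2 c(3) below by (auto simp: straddling_def)
    then show ?thesis using inc 2(3) by blast
  next
    case (3 j)
    show ?thesis
    proof (cases "y \<le> L ! j")
      case True
      have "L ! j \<in> set L" using red_pos_less_length[OF 3(1)] by simp
      then show ?thesis using old 3(3) True by blast
    next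
      case False
      have "0 < j" using red_pos_neighbours(1)[OF 3(1)] .
      then have "L ! (j - 1) < L ! j"
        using seq_nth_less[of "j - 1" j] red_pos_less_length[OF 3(1)] by simp
      then have "j \<in> straddling y" using 3 c(3) False by (auto simp: straddling_def)
      then show ?thesis using inc 3(3) False by blast
    qed
  qed
qed

lemma card_Dset_reduced:
  assumes "\<forall>e\<in>set L. card (cmap H e) \<le> b \<and> card (wmap H e) \<le> b"
  shows "card (Dset reduced_heap reduced_seq x) \<le> card (Dset H L x) + b + 1"
proof (cases x)
  case None
  then show ?thesis using card_mono[OF finite_Dset Dset_reduced_None] by simp
next
  case (Some y)
  have "finite (D_increment y) \<and> card (D_increment y) \<le> b + 1"
  proof (cases "straddling y = {}")
    case False
    then obtain p where p: "straddling y = {p}" using straddling_unique by blast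
    then have "red_pos L p" by (auto simp: straddling_def)
    then have "L ! p \<in> set L" using red_pos_less_length[of L p] by simp
    then show ?thesis
      using assms finite_cmap finite_wmap
      unfolding D_increment_def p by (auto simp: card_insert_if intro: le_SucI)
  qed (simp add: D_increment_def)
  moreover have "card (Dset reduced_heap reduced_seq (Some y)) \<le> card (Dset H L (Some y) \<union> D_increment y)"
    using Dset_reduced_Some calculation by (simp add: card_mono finite_Dset)
  ultimately show ?thesis using Some card_Un_le[of "Dset H L (Some y)" "D_increment y"] by simp
qed

lemma card_reduced_sets:
  assumes "\<forall>e\<in>set L. card (cmap H e) \<le> b \<and> card (wmap H e) \<le> b" and "e \<in> set reduced_seq"
  shows "card (reduced_C e) \<le> 2 * b + 1 \<and> card (reduced_W e) \<le> 2 * b + 1"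
proof -
  have card_le: "card (A \<union> (if P then insert a B else {})) \<le> 2 * b + 1"
    if "finite A" "finite B" "card A \<le> b" "P \<Longrightarrow> card B \<le> b" for A B a P
  proof (cases P)
    case True
    have "card (insert a B) \<le> card B + 1" using \<open>finite B\<close> by (simp add: card_insert_if)
    then show ?thesis using card_Un_le[of A "insert a B"] True that by simp
  qed (use that in simp)
  obtain k where k: "k < length L" "\<not> red_pos L k" "e = L ! k"
    using assms(2) by (auto simp: reduced_seq_def set_fst_reduce)
  have "L ! (k - 1) \<in> set L" "red_pos L (k + 1) \<Longrightarrow> L ! (k + 1) \<in> set L"
    using k(1) red_pos_less_length[of L "k + 1"] by auto
  then show ?thesis
    unfolding k(3) reduced_C_kept[OF k(1,2)] reduced_W_kept[OF k(1,2)]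
    using assms(1) k(1) by (intro conjI card_le) (auto simp: finite_cmap finite_wmap)
qed

end

section \<open>Merging\<close>

locale heap_pair = wf_heap H for H :: "'k::linorder sheap" +
  fixes xs ys :: "('k list \<times> nat) list" and LA LB :: "'k list" and r :: nat
  assumes seqs_split: "seqs H = xs @ (LA, r) # (LB, r) # ys"
begin

definition "merged_seq = sort (LA @ LB)"
definition "merged_heap = \<lparr>seqs = xs @ (merged_seq, Suc r) # ys, cmap = cmap H, wmap = wmap H\<rparr>"

lemma merged_heap_simps [simp]:
  "seqs merged_heap = xs @ (merged_seq, Suc r) # ys"
  "cmap merged_heap = cmap H" "wmap merged_heap = wmap H"
  by (simp_all add: merged_heap_def)

lemma set_merged_seq [simp]: "set merged_seq = set LA \<union> set LB"
  by (simp add: merged_seq_def)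

lemma seq_items_merged_heap: "seq_items merged_heap = seq_items H"
  by (auto simp: seq_items_eq seqs_split)

lemma Dset_merged_heap: "Dset merged_heap = Dset H"
  unfolding Dset_def in_I_def seq_items_merged_heap merged_heap_simps ..

lemma wf_merged_heap: "wf_heap merged_heap"
proof
  have "distinct (LA @ LB)" and "set (LA @ LB) \<inter> set (concat (map fst (xs @ ys))) = {}"
    using distinct_items by (auto simp: seqs_split)
  then show "distinct (concat (map fst (seqs merged_heap)))"
    using distinct_items by (auto simp: seqs_split merged_seq_def)
  have "LA \<noteq> []" "distinct (LA @ LB)"
    using seq_not_Nil distinct_items by (auto simp: seqs_split)
  then have "merged_seq \<noteq> []" "sorted_wrt (<) merged_seq"
    unfolding merged_seq_def strict_sorted_iff
    by (metis Nil_is_append_conv length_0_conv length_sort, simp)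
  then show "K \<noteq> []" and "sorted_wrt (<) K" if "(K, r') \<in> set (seqs merged_heap)" for K r'
    using that seq_not_Nil seq_sorted by (auto simp: seqs_split)
  show "\<exists>c\<in>set K. w < c \<and> f \<in> cmap merged_heap c"
    if "(K, r') \<in> set (seqs merged_heap)" "w \<in> set K" "f \<in> wmap merged_heap w" for K r' w f
    using that witnessed_corrupted_later[of _ _ w f] by (fastforce simp: seqs_split)
qed (use sets_outside seq_item_notin_cmap cmap_disjoint finite_cmap finite_wmap
       in \<open>simp_all add: seq_items_merged_heap\<close>)

lemma merged_seq_bounds:
  assumes "heap_bounded r0 H"
  shows "card (Dset H merged_seq x) \<le> 2 * d_bound (r - r0)"
    and "e \<in> set merged_seq \<Longrightarrow> card (cmap H e) \<le> cw_bound (r - r0) \<and> card (wmap H e) \<le> cw_bound (r - r0)"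
proof -
  have "seq_bounded r0 H LA r" "seq_bounded r0 H LB r"
    using heap_boundedD[OF assms] by (simp_all add: seqs_split)
  then have "card (Dset H LA x) \<le> d_bound (r - r0)" "card (Dset H LB x) \<le> d_bound (r - r0)"
    unfolding seq_bounded_def by blast+
  moreover have "Dset H merged_seq x = Dset H LA x \<union> Dset H LB x"
    by (auto simp: Dset_def)
  ultimately show "card (Dset H merged_seq x) \<le> 2 * d_bound (r - r0)"
    using card_Un_le[of "Dset H LA x" "Dset H LB x"] by simp
  show "e \<in> set merged_seq \<Longrightarrow> card (cmap H e) \<le> cw_bound (r - r0) \<and> card (wmap H e) \<le> cw_bound (r - r0)"
    using \<open>seq_bounded r0 H LA r\<close> \<open>seq_bounded r0 H LB r\<close> unfolding seq_bounded_def by auto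
qed

lemma heap_bounded_merged_heap:
  assumes "heap_bounded r0 H"
  shows "heap_bounded r0 merged_heap"
proof (rule heap_boundedI)
  fix K r' assume "(K, r') \<in> set (seqs merged_heap)"
  then consider "(K, r') \<in> set (seqs H)" | "K = merged_seq" "r' = Suc r"
    by (auto simp: seqs_split)
  then show "seq_bounded r0 merged_heap K r'"
  proof cases
    case 1
    then show ?thesis using heap_boundedD[OF assms] by (simp add: seq_bounded_def Dset_merged_heap)
  next
    case 2
    have "card (Dset merged_heap K x) \<le> d_bound (r' - r0)" for x
      using merged_seq_bounds(1)[OF assms, of x] d_bound_Suc_ge[of r r0] 2
      by (simp add: Dset_merged_heap)
    moreover have "card (cmap merged_heap e) \<le> cw_bound (r' - r0) \<and> card (wmap merged_heap e) \<le> cw_bound (r' - r0)"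
      if "e \<in> set K" for e
      using merged_seq_bounds(2)[OF assms] that cw_bound_Suc_ge[of r r0] 2 by fastforce
    ultimately show ?thesis by (simp add: seq_bounded_def)
  qed
qed

lemma heap_bounded_reduced_merged_heap:
  assumes "heap_bounded r0 H" and "r0 < Suc r" and "even (Suc r - r0)"
  shows "heap_bounded r0 (heap_seq.reduced_heap merged_heap xs ys merged_seq (Suc r))"
proof -
  interpret M: heap_seq merged_heap xs ys merged_seq "Suc r"
    by (rule heap_seq.intro[OF wf_merged_heap]) (simp add: heap_seq_axioms_def)
  have sets: "\<forall>e\<in>set merged_seq. card (cmap merged_heap e) \<le> cw_bound (r - r0)
      \<and> card (wmap merged_heap e) \<le> cw_bound (r - r0)"
    using merged_seq_bounds(2)[OF assms(1)] by simp
  show ?thesis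
  proof (rule heap_boundedI)
    fix K r' assume "(K, r') \<in> set (seqs M.reduced_heap)"
    then consider "(K, r') \<in> set (xs @ ys)" | "K = M.reduced_seq" "r' = Suc r" by auto
    then show "seq_bounded r0 M.reduced_heap K r'"
    proof cases
      case 1
      then show ?thesis
        using M.seq_bounded_reduced_other heap_boundedD[OF heap_bounded_merged_heap[OF assms(1)]]
        by auto
    next
      case 2
      have "card (Dset M.reduced_heap M.reduced_seq x) \<le> d_bound (r' - r0)" for x
        using M.card_Dset_reduced[OF sets, of x] merged_seq_bounds(1)[OF assms(1), of x]
          bounds_Suc_even[OF assms(2,3)] 2
        by (simp add: Dset_merged_heap)
      moreover have "card (M.reduced_C e) \<le> cw_bound (r' - r0) \<and> card (M.reduced_W e) \<le> cw_bound (r' - r0)"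
        if "e \<in> set M.reduced_seq" for e
        using M.card_reduced_sets[OF sets that] bounds_Suc_even[OF assms(2,3)] 2 by simp
      ultimately show ?thesis using 2 by (simp add: seq_bounded_def)
    qed
  qed
qed

end

lemma merge_step_preserves:
  assumes "wf_heap H" and "heap_bounded r0 H" and "merge_step r0 H H'"
  shows "wf_heap H' \<and> heap_bounded r0 H'"
proof -
  obtain xs A B ys where split0: "seqs H = xs @ A # B # ys" and rank: "snd A = snd B"
    and H': "case merge r0 A B (cmap H) (wmap H) of
      (M, C', W') \<Rightarrow> H' = \<lparr>seqs = xs @ M # ys, cmap = C', wmap = W'\<rparr>"
    using assms(3) unfolding merge_step_def by (elim exE conjE) (rule that)
  obtain LA r where A: "A = (LA, r)" by (cases A)
  obtain LB where B: "B = (LB, r)" using rank A by (cases B) auto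
  have split: "seqs H = xs @ (LA, r) # (LB, r) # ys" using split0 A B by simp
  interpret heap_pair H xs ys LA LB r
    by (rule heap_pair.intro[OF assms(1)]) (simp add: heap_pair_axioms_def split)
  have merge_eq: "merge r0 A B (cmap H) (wmap H) = (if r0 < Suc r \<and> even (Suc r - r0)
      then (case reduce merged_seq (cmap H) (wmap H) of (L', C', W') \<Rightarrow> ((L', Suc r), C', W'))
      else ((merged_seq, Suc r), cmap H, wmap H))"
    by (simp only: merge_def Let_def A B fst_conv snd_conv merged_seq_def)
  show ?thesis
  proof (cases "r0 < Suc r \<and> even (Suc r - r0)")
    case False
    then have "H' = merged_heap"
      using H' unfolding merge_eq if_not_P[OF False] by (simp add: merged_heap_def)
    then show ?thesis using wf_merged_heap heap_bounded_merged_heap[OF assms(2)] by simp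
  next
    case True
    interpret M: heap_seq merged_heap xs ys merged_seq "Suc r"
      by (rule heap_seq.intro[OF wf_merged_heap]) (simp add: heap_seq_axioms_def)
    have "H' = M.reduced_heap"
      using H' unfolding merge_eq if_P[OF True]
      by (simp add: M.reduced_heap_def M.reduced_seq_def M.reduced_C_def M.reduced_W_def
          case_prod_unfold)
    then show ?thesis
      using M.wf_reduced_heap heap_bounded_reduced_merged_heap[OF assms(2) conjunct1[OF True] conjunct2[OF True]]
      by simp
  qed
qed

lemma normalize_preserves:
  assumes "normalize r0 H H'" and "wf_heap H" and "heap_bounded r0 H"
  shows "wf_heap H' \<and> heap_bounded r0 H'"
proof -
  have "(merge_step r0)\<^sup>*\<^sup>* H H'" using assms(1) by (simp add: normalize_def)
  then show ?thesis
    by (induction rule: rtranclp_induct) (use assms(2,3) merge_step_preserves in blast)+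
qed

section \<open>The heap operations\<close>

lemma empty_heap_invariants: "wf_heap empty_heap \<and> heap_bounded r0 empty_heap"
  by (auto simp: wf_heap_def heap_bounded_def empty_heap_def seq_items_def)

lemma insert_init_preserves:
  assumes "wf_heap H" and "heap_bounded r0 H" and new: "e \<notin> heap_items H"
  shows "wf_heap (insert_init e H) \<and> heap_bounded r0 (insert_init e H)"
proof -
  interpret wf_heap H by fact
  have e_not_seq_item: "e \<notin> seq_items H" using new by (simp add: heap_items_def)
  have e_not_corrupted: "e \<notin> cmap H c" for c using new cmap_subset_heap_items by blast
  have e_sets: "cmap H e = {}" "wmap H e = {}" using sets_outside[OF e_not_seq_item] by auto
  define I where "I = \<lparr>seqs = ([e], 0) # seqs H, cmap = cmap H, wmap = wmap H\<rparr>"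
  have "insert_init e H = I" using e_sets by (simp add: insert_init_def I_def fun_upd_idem)
  have I_simps: "seqs I = ([e], 0) # seqs H" "cmap I = cmap H" "wmap I = wmap H"
    by (simp_all add: I_def)
  have seq_items_I: "seq_items I = insert e (seq_items H)" by (simp add: seq_items_eq I_simps)
  have witnesses_I: "witnesses I f = witnesses H f" for f
    using e_sets by (auto simp: witnesses_def seq_items_I I_simps)
  have "wf_heap I"
  proof
    show "distinct (concat (map fst (seqs I)))"
      using distinct_items e_not_seq_item by (simp add: I_simps seq_items_eq)
    show "K \<noteq> []" and "sorted_wrt (<) K" if "(K, r) \<in> set (seqs I)" for K r
      using that seq_not_Nil seq_sorted by (auto simp: I_simps)
    show "\<exists>c\<in>set K. w < c \<and> f \<in> cmap I c"
      if "(K, r) \<in> set (seqs I)" "w \<in> set K" "f \<in> wmap I w" for K r w f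
      using that witnessed_corrupted_later e_sets by (auto simp: I_simps)
  qed (use sets_outside seq_item_notin_cmap e_not_corrupted cmap_disjoint finite_cmap finite_wmap
       in \<open>auto simp: seq_items_I I_simps\<close>)
  moreover have "heap_bounded r0 I"
  proof (rule heap_boundedI)
    fix K r assume "(K, r) \<in> set (seqs I)"
    then consider "K = [e]" "r = 0" | "(K, r) \<in> set (seqs H)" by (auto simp: I_simps)
    then show "seq_bounded r0 I K r"
    proof cases
      case 1
      then show ?thesis using e_sets by (simp add: seq_bounded_def Dset_def I_simps)
    next
      case 2
      show ?thesis
        by (rule seq_bounded_mono[OF assms(1) heap_boundedD[OF assms(2) 2]])
          (simp_all add: witnesses_I I_simps)
    qed
  qed
  ultimately show ?thesis using \<open>insert_init e H = I\<close> by simp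
qed

lemma distinct_concat_sort_key:
  "distinct (concat (map g (sort_key f xs))) \<longleftrightarrow> distinct (concat (map g xs))"
  by (rule mset_eq_imp_distinct_iff) (simp add: mset_concat flip: sum_mset_sum_list)

locale disjoint_heaps = H1: wf_heap H1 + H2: wf_heap H2 for H1 H2 :: "'k::linorder sheap" +
  assumes disjoint: "heap_items H1 \<inter> heap_items H2 = {}"
begin

lemma set_seqs_meld_init: "set (seqs (meld_init H1 H2)) = set (seqs H1) \<union> set (seqs H2)"
  by (simp add: meld_init_def)

lemma seq_items_meld_init: "seq_items (meld_init H1 H2) = seq_items H1 \<union> seq_items H2"
  unfolding seq_items_def set_seqs_meld_init by blast

lemma seq_items_disjoint: "seq_items H1 \<inter> seq_items H2 = {}"
  using disjoint by (auto simp: heap_items_def)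

lemma sets_meld_init:
  "cmap (meld_init H1 H2) e = (if e \<in> seq_items H1 then cmap H1 e else cmap H2 e)"
  "wmap (meld_init H1 H2) e = (if e \<in> seq_items H1 then wmap H1 e else wmap H2 e)"
  by (simp_all add: meld_init_def)

lemma sets_meld_init_seq:
  assumes "c \<in> set K"
  shows "(K, r) \<in> set (seqs H1) \<Longrightarrow> cmap (meld_init H1 H2) c = cmap H1 c \<and> wmap (meld_init H1 H2) c = wmap H1 c"
    and "(K, r) \<in> set (seqs H2) \<Longrightarrow> cmap (meld_init H1 H2) c = cmap H2 c \<and> wmap (meld_init H1 H2) c = wmap H2 c"
  using seq_itemsI[of K r _ c] assms seq_items_disjoint by (auto simp: sets_meld_init)

lemma wf_meld_init: "wf_heap (meld_init H1 H2)"
proof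
  have "distinct (concat (map fst (seqs H1)) @ concat (map fst (seqs H2)))"
    using H1.distinct_items H2.distinct_items seq_items_disjoint by (simp add: seq_items_eq)
  then show "distinct (concat (map fst (seqs (meld_init H1 H2))))"
    by (simp add: meld_init_def distinct_concat_sort_key)
  show "K \<noteq> []" and "sorted_wrt (<) K" if "(K, r) \<in> set (seqs (meld_init H1 H2))" for K r
    using that H1.seq_not_Nil H2.seq_not_Nil H1.seq_sorted H2.seq_sorted set_seqs_meld_init by blast+
  show "cmap (meld_init H1 H2) e = {} \<and> wmap (meld_init H1 H2) e = {}"
    if "e \<notin> seq_items (meld_init H1 H2)" for e
    using that H2.sets_outside[of e] by (simp add: seq_items_meld_init sets_meld_init)
  have across: "cmap H1 c \<inter> heap_items H2 = {}" "cmap H2 c \<inter> heap_items H1 = {}" for c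
    using disjoint H1.cmap_subset_heap_items H2.cmap_subset_heap_items by blast+
  show "e \<notin> cmap (meld_init H1 H2) e'" if "e \<in> seq_items (meld_init H1 H2)" for e e'
  proof (cases "e' \<in> seq_items H1")
    case True
    then show ?thesis using that H1.seq_item_notin_cmap across(1)[of e']
      by (auto simp: seq_items_meld_init sets_meld_init heap_items_def)
  next
    case False
    then show ?thesis using that H2.seq_item_notin_cmap across(2)[of e']
      by (auto simp: seq_items_meld_init sets_meld_init heap_items_def)
  qed
  have "cmap H1 c \<inter> cmap H2 c' = {}" for c c'
    using disjoint H1.cmap_subset_heap_items H2.cmap_subset_heap_items by blast
  then show "cmap (meld_init H1 H2) e1 \<inter> cmap (meld_init H1 H2) e2 = {}" if "e1 \<noteq> e2" for e1 e2
    using H1.cmap_disjoint[OF that] H2.cmap_disjoint[OF that] by (auto simp: sets_meld_init)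
  show "\<exists>c\<in>set K. w < c \<and> f \<in> cmap (meld_init H1 H2) c"
    if "(K, r) \<in> set (seqs (meld_init H1 H2))" "w \<in> set K" "f \<in> wmap (meld_init H1 H2) w" for K r w f
    using that H1.witnessed_corrupted_later[of K r w f] H2.witnessed_corrupted_later[of K r w f]
      sets_meld_init_seq[of _ K r] set_seqs_meld_init by auto
  show "finite (cmap (meld_init H1 H2) e)" "finite (wmap (meld_init H1 H2) e)" for e
    by (simp_all add: sets_meld_init H1.finite_cmap H2.finite_cmap H1.finite_wmap H2.finite_wmap)
qed

lemma heap_bounded_meld_init:
  assumes "heap_bounded r0 H1" and "heap_bounded r0 H2"
  shows "heap_bounded r0 (meld_init H1 H2)"
proof (rule heap_boundedI)
  fix K r assume "(K, r) \<in> set (seqs (meld_init H1 H2))"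
  then consider "(K, r) \<in> set (seqs H1)" | "(K, r) \<in> set (seqs H2)"
    using set_seqs_meld_init by blast
  then show "seq_bounded r0 (meld_init H1 H2) K r"
  proof cases
    case 1
    show ?thesis
      by (rule seq_bounded_mono[OF H1.wf_heap_axioms heap_boundedD[OF assms(1) 1]])
        (use sets_meld_init_seq(1)[OF _ 1] in \<open>auto simp: witnesses_def seq_items_meld_init sets_meld_init\<close>)
  next
    case 2
    show ?thesis
      by (rule seq_bounded_mono[OF H2.wf_heap_axioms heap_boundedD[OF assms(2) 2]])
        (use sets_meld_init_seq(2)[OF _ 2] seq_items_disjoint
          in \<open>auto simp: witnesses_def seq_items_meld_init sets_meld_init\<close>)
  qed
qed

end

lemma extract_corrupted_preserves:
  assumes "wf_heap H" and "heap_bounded r0 H" and "e' \<in> cmap H e"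
  defines "H' \<equiv> \<lparr>seqs = seqs H, cmap = (cmap H)(e := cmap H e - {e'}), wmap = (\<lambda>x. wmap H x - {e'})\<rparr>"
  shows "wf_heap H' \<and> heap_bounded r0 H'"
proof -
  interpret wf_heap H by fact
  have H'_simps: "seqs H' = seqs H" "seq_items H' = seq_items H" "wmap H' x = wmap H x - {e'}"
    "cmap H' x = (if x = e then cmap H e - {e'} else cmap H x)" for x
    by (simp_all add: H'_def seq_items_def)
  have cmap_shrinks: "cmap H' x \<subseteq> cmap H x" for x by (simp add: H'_simps)
  have not_extracted: "f \<noteq> e'" if "f \<in> cmap H' c" for f c
    using that assms(3) cmap_disjoint[of c e] by (auto simp: H'_simps split: if_splits)
  have "wf_heap H'"
  proof
    show "\<exists>c\<in>set K. w < c \<and> f \<in> cmap H' c"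
      if "(K, r) \<in> set (seqs H')" "w \<in> set K" "f \<in> wmap H' w" for K r w f
      using that witnessed_corrupted_later[of K r w f] by (auto simp: H'_simps)
    show "finite (cmap H' x)" for x using finite_subset[OF cmap_shrinks finite_cmap] .
  qed (use distinct_items seq_not_Nil seq_sorted sets_outside seq_item_notin_cmap cmap_disjoint
         finite_wmap cmap_shrinks in \<open>(simp add: H'_simps; blast)+\<close>)
  moreover have "heap_bounded r0 H'"
  proof (rule heap_boundedI)
    fix K r assume "(K, r) \<in> set (seqs H')"
    then show "seq_bounded r0 H' K r"
      using not_extracted cmap_shrinks
      by (intro seq_bounded_mono[OF assms(1) heap_boundedD[OF assms(2)]])
        (auto simp: H'_simps witnesses_def)
  qed
  ultimately show ?thesis ..
qed

locale heap_head = wf_heap H for H :: "'k::linorder sheap" +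
  fixes xs ys :: "('k list \<times> nat) list" and e :: 'k and rest :: "'k list" and r :: nat
  assumes seqs_split: "seqs H = xs @ (e # rest, r) # ys"
    and head_uncorrupted: "cmap H e = {}"
begin

definition "popped_heap = \<lparr>seqs = xs @ (if rest = [] then [] else [(rest, r)]) @ ys,
  cmap = cmap H, wmap = (wmap H)(e := {})\<rparr>"

lemma popped_heap_simps [simp]:
  "seqs popped_heap = xs @ (if rest = [] then [] else [(rest, r)]) @ ys"
  "cmap popped_heap = cmap H" "wmap popped_heap = (wmap H)(e := {})"
  by (simp_all add: popped_heap_def)

lemma head_in_heap: "(e # rest, r) \<in> set (seqs H)"
  by (simp add: seqs_split)

lemma head_less: "c \<in> set rest \<Longrightarrow> e < c"
  using seq_sorted[OF head_in_heap] by simp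

lemma head_notin_others: "(K, r') \<in> set (xs @ ys) \<Longrightarrow> c \<in> set K \<Longrightarrow> c \<notin> set (e # rest)"
  using distinct_items by (fastforce simp: seqs_split)

lemma seqs_popped_heap:
  "(K, r') \<in> set (seqs popped_heap) \<Longrightarrow> (K, r') \<in> set (xs @ ys) \<or> (K = rest \<and> r' = r \<and> rest \<noteq> [])"
  by (auto split: if_splits)

lemma seq_items_popped_heap: "seq_items popped_heap = seq_items H - {e}"
  using distinct_items by (auto simp: seq_items_eq seqs_split)

lemma witnesses_popped_heap: "witnesses popped_heap f = witnesses H f - {e}"
  by (auto simp: witnesses_def seq_items_popped_heap)

lemma wf_popped_heap: "wf_heap popped_heap"
proof
  show "distinct (concat (map fst (seqs popped_heap)))"
    using distinct_items by (auto simp: seqs_split)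
  show "K \<noteq> []" and "sorted_wrt (<) K" if "(K, r') \<in> set (seqs popped_heap)" for K r'
    using seqs_popped_heap[OF that] seq_not_Nil seq_sorted[OF head_in_heap]
      seq_sorted[of K r'] by (auto simp: seqs_split)
  show "cmap popped_heap x = {} \<and> wmap popped_heap x = {}" if "x \<notin> seq_items popped_heap" for x
    using that sets_outside head_uncorrupted by (auto simp: seq_items_popped_heap)
  show "\<exists>c\<in>set K. w < c \<and> f \<in> cmap popped_heap c"
    if K: "(K, r') \<in> set (seqs popped_heap)" "w \<in> set K" and f: "f \<in> wmap popped_heap w" for K r' w f
  proof -
    consider "(K, r') \<in> set (xs @ ys)" | "K = rest" using seqs_popped_heap[OF K(1)] by blast
    then show ?thesis
    proof cases
      case 1
      then have "f \<in> wmap H w" using f head_notin_others[OF 1 K(2)] by simp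
      then show ?thesis using witnessed_corrupted_later[of K r' w f] 1 K(2) by (auto simp: seqs_split)
    next
      case 2
      then have "w \<in> set rest" using K(2) by simp
      then have "f \<in> wmap H w" using f head_less[of w] by (auto split: if_splits)
      then obtain c where "c \<in> set (e # rest)" "w < c" "f \<in> cmap H c"
        using witnessed_corrupted_later[OF head_in_heap, of w f] \<open>w \<in> set rest\<close> by auto
      then show ?thesis using 2 head_less[OF \<open>w \<in> set rest\<close>] by auto
    qed
  qed
qed (use seq_item_notin_cmap cmap_disjoint finite_cmap finite_wmap
       in \<open>simp_all add: seq_items_popped_heap\<close>)

text \<open>Popping e makes the items of W(e) lose their witness; since they are corrupted by later
items of the sequence, they already belong to D(e # rest, hd rest).\<close>
lemma Dset_popped_rest:
  assumes "rest \<noteq> []"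
  shows "Dset popped_heap rest x \<subseteq>
    Dset H (e # rest) (Some (case x of None \<Rightarrow> hd rest | Some y \<Rightarrow> max y (hd rest)))"
proof
  fix f assume "f \<in> Dset popped_heap rest x"
  then obtain c where c: "c \<in> set rest" "f \<in> cmap H c" and in_I: "in_I popped_heap f c x"
    unfolding Dset_def by auto
  have "hd rest \<le> c" using c(1) assms seq_sorted[OF head_in_heap] by (cases rest) (auto simp: less_imp_le)
  moreover have "w < hd rest \<or> w \<in> witnesses popped_heap f" if "w \<in> witnesses H f" for w
    using that assms head_less[of "hd rest"] by (auto simp: witnesses_popped_heap)
  ultimately have "in_I H f c (Some (case x of None \<Rightarrow> hd rest | Some y \<Rightarrow> max y (hd rest)))"
    using in_I unfolding in_I_witnesses by (cases x) (auto simp: less_max_iff_disj)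
  then show "f \<in> Dset H (e # rest) (Some (case x of None \<Rightarrow> hd rest | Some y \<Rightarrow> max y (hd rest)))"
    using c unfolding Dset_def by auto
qed

lemma heap_bounded_popped_heap:
  assumes "heap_bounded r0 H"
  shows "heap_bounded r0 popped_heap"
proof (rule heap_boundedI)
  fix K r' assume "(K, r') \<in> set (seqs popped_heap)"
  then consider "(K, r') \<in> set (xs @ ys)" | "K = rest" "r' = r" "rest \<noteq> []"
    using seqs_popped_heap by blast
  then show "seq_bounded r0 popped_heap K r'"
  proof cases
    case 1
    have "witnesses H f \<subseteq> witnesses popped_heap f" if "c \<in> set K" "f \<in> cmap H c" for c f
    proof -
      have "f \<notin> wmap H e"
        using witnessed_corrupted_later[OF head_in_heap, of e f] cmap_disjoint[of c]
          that head_notin_others[OF 1 that(1)] by fastforce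
      then show ?thesis unfolding witnesses_popped_heap by (auto simp: witnesses_def)
    qed
    moreover have "(K, r') \<in> set (seqs H)" using 1 by (auto simp: seqs_split)
    ultimately show ?thesis
      using head_notin_others[OF 1]
      by (intro seq_bounded_mono[OF wf_heap_axioms heap_boundedD[OF assms]]) auto
  next
    case 2
    have bounded: "seq_bounded r0 H (e # rest) r" using heap_boundedD[OF assms head_in_heap] .
    have "card (Dset popped_heap rest x) \<le> d_bound (r - r0)" for x
      using card_mono[OF finite_Dset Dset_popped_rest[OF 2(3)]] bounded
      unfolding seq_bounded_def by (meson order_trans)
    moreover have "e \<notin> set rest" using head_less by blast
    ultimately show ?thesis using bounded 2 by (auto simp: seq_bounded_def)
  qed
qed

end

lemma reachable_invariants:
  assumes "reachable r0 H"
  shows "wf_heap H \<and> heap_bounded r0 H"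
  using assms
proof (induction rule: reachable.induct)
  case empty
  then show ?case by (rule empty_heap_invariants)
next
  case (insert H e H')
  then show ?case using insert_init_preserves normalize_preserves by blast
next
  case (meld H1 H2 H')
  then interpret disjoint_heaps H1 H2 by (simp add: disjoint_heaps_def disjoint_heaps_axioms_def)
  show ?case
    using wf_meld_init heap_bounded_meld_init meld normalize_preserves by blast
next
  case (extract_corrupted H e e' H')
  then show ?case using extract_corrupted_preserves by blast
next
  case (extract_head H xs e rest r ys H')
  interpret heap_head H xs ys e rest r
    using extract_head by (simp add: heap_head_def heap_head_axioms_def)
  have "H' = popped_heap" by (simp add: popped_heap_def extract_head.hyps(5))
  then show ?case using wf_popped_heap heap_bounded_popped_heap extract_head.IH by simp
qed

lemma corrupted_subset_Dset_None: "{e. corrupted H e \<and> (\<exists>e'\<in>set L. e \<in> cmap H e')} \<subseteq> Dset H L None"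
  by (auto simp: corrupted_def Dset_def in_I_def)

theorem lemma7:
  fixes eps :: real and H :: "'k::linorder sheap"
  assumes "0 < eps" and "eps < 1"
    and "reachable (nat \<lceil>log 2 (1 / eps)\<rceil>) H"
  shows "\<forall>(L, r)\<in>set (seqs H).
           (\<forall>x. finite (Dset H L x) \<and> card (Dset H L x) \<le> dbound (nat \<lceil>log 2 (1 / eps)\<rceil>) r)
         \<and> card {e. corrupted H e \<and> (\<exists>e'\<in>set L. e \<in> cmap H e')}
             \<le> dbound (nat \<lceil>log 2 (1 / eps)\<rceil>) r"
proof (intro ballI, clarify)
  fix L r assume L: "(L, r) \<in> set (seqs H)"
  define r0 where "r0 = nat \<lceil>log 2 (1 / eps)\<rceil>"
  have "wf_heap H" and bounded: "heap_bounded r0 H"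
    using reachable_invariants assms(3) by (auto simp: r0_def)
  then interpret wf_heap H by simp
  have D: "finite (Dset H L x) \<and> card (Dset H L x) \<le> dbound r0 r" for x
    using finite_Dset heap_boundedD[OF bounded L] d_bound_le_dbound[of r r0]
    unfolding seq_bounded_def by (meson order_trans)
  then have "card {e. corrupted H e \<and> (\<exists>e'\<in>set L. e \<in> cmap H e')} \<le> dbound r0 r"
    using D[of None] card_mono[OF finite_Dset corrupted_subset_Dset_None] by (meson order_trans)
  with D show "(\<forall>x. finite (Dset H L x) \<and> card (Dset H L x) \<le> dbound r0 r) \<and>
      card {e. corrupted H e \<and> (\<exists>e'\<in>set L. e \<in> cmap H e')} \<le> dbound r0 r" by blast
qed

end
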